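(* Let $\mathrm V=(\mathscr V,\star)$ be a normal duoidal category and $\mathscr C$ a left $\mathscr V$-graded category. The assignment $(f,g,\varphi,\varphi')\mapsto(f_\ell,g_\ell,\varphi_r,\varphi'_r)$ is a bijection from the set of $\mathrm V$-graded squares in $\mathscr C$ onto the set of bigraded squares in the $(\mathscr V\times\mathscr V)$-graded category $\mathscr C_\star$.
   Context: $\mathscr V=(\mathscr V,\otimes,I,a,\ell,r)$ is a monoidal category. A normal duoidal category $\mathrm V=(\mathscr V,\star)$ consists of $\mathscr V$ together with a second monoidal structure $(\star,J,\alpha,\lambda,\rho)$ on the same category, natural interchange morphisms $\xi\colon(Y\otimes X)\star(Y'\otimes X')\to(Y\star Y')\otimes(X\star X')$ and morphisms $\mu\colon I\star I\to I$, $\nu\colon J\to I$, $\gamma\colon J\to J\otimes J$ satisfying the duoidal axioms (i.e. $\star$ and $J$ are opmonoidal functors for $\otimes$ with constraints $\xi,\mu$ and $\gamma,\nu$, and $\alpha,\lambda,\rho$ are opmonoidal transformations), with $\nu$ invertible; we assume $J=I$, $\nu=1_I$. Define $\sigma\colon X\star X'\to X\otimes X'$ as $(\rho\otimes\lambda)\circ\xi\circ(r^{-1}\star\ell^{-1})$ (through $(X\otimes I)\star(I\otimes X')$) and $\tau\colon X\star X'\to X'\otimes X$ as $(\lambda\otimes\rho)\circ\xi\circ(\ell^{-1}\star r^{-1})$ (through $(I\otimes X)\star(X'\otimes I)$). A left $\mathscr U$-graded category (for monoidal $\mathscr U$) has objects, sets $\mathscr C_X(A,B)$, reindexings $\alpha^*f$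 along $\alpha\colon Y\to X$, composites $g\circ f\in\mathscr C_{Y\otimes X}(A,C)$, identities $\mathsf i_A\in\mathscr C_I(A,A)$, with functorial reindexing, $\beta^*g\circ\alpha^*f=(\beta\otimes\alpha)^*(g\circ f)$, $(h\circ g)\circ f=a^*(h\circ(g\circ f))$, $f\circ\mathsf i_A=r_X^*f$, $\mathsf i_B\circ f=\ell_X^*f$. $\mathscr C_\star$ is the left $(\mathscr V\times\mathscr V)$-graded category (componentwise $\otimes$) with the same objects, $(\mathscr C_\star)_{(X,X')}(A,B)=\mathscr C_{X\star X'}(A,B)$, reindexing along $(\alpha,\beta)$ given by $(\alpha\star\beta)^*$, composite $g\circ_\star f:=\xi^*(g\circ f)$, identities $\mu^*(\mathsf i_A)$. For $f\in\mathscr C_X(A,B)$ set $f_\ell:=\rho^*(f)\in(\mathscr C_\star)_{(X,I)}(A,B)$ and $f_r:=\lambda^*(f)\in(\mathscr C_\star)_{(I,X)}(A,B)$. A $\mathrm V$-graded square in $\mathscr C$ is $(f,g,\varphi,\varphi')$ with $f\in\mathscr C_X(A,A')$, $g\in\mathscr C_X(B,B')$, $\varphi\in\mathscr C_{X'}(A,B)$, $\varphi'\in\mathscr C_{X'}(A',B')$ and $\sigma^*(g\circ\varphi)=\tau^*(\varphi'\circ f)$ in $\mathscr C_{X\star X'}(A,B')$. A bigraded square in a $(\mathscr V\times\mathscr V)$-graded category $\mathscr D$ is $(f,g,\varphi,\varphi')$ with $f\in\mathscr D_{(X,I)}(A,A')$, $g\in\mathscr D_{(X,I)}(B,B')$,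 $\varphi\in\mathscr D_{(I,X')}(A,B)$, $\varphi'\in\mathscr D_{(I,X')}(A',B')$ and $(r_X^{-1},\ell_{X'}^{-1})^*(g\circ\varphi)=(\ell_X^{-1},r_{X'}^{-1})^*(\varphi'\circ f)$ in $\mathscr D_{(X,X')}(A,B')$. *)

theory Defs
  imports Main
begin

record ('o,'m) cat =
  Obj :: "'o set"
  Arr :: "'m set"
  Dom :: "'m \<Rightarrow> 'o"
  Cod :: "'m \<Rightarrow> 'o"
  Cmp :: "'m \<Rightarrow> 'm \<Rightarrow> 'm"   (* Cmp g f = g \<circ> f *)
  Idt :: "'o \<Rightarrow> 'm"

definition hom :: "('o,'m,'z) cat_scheme \<Rightarrow> 'o \<Rightarrow> 'o \<Rightarrow> 'm set" where
  "hom V X Y = {f \<in> Arr V. Dom V f = X \<and> Cod V f = Y}"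

definition category :: "('o,'m,'z) cat_scheme \<Rightarrow> bool" where
  "category V \<longleftrightarrow>
     (\<forall>f\<in>Arr V. Dom V f \<in> Obj V \<and> Cod V f \<in> Obj V) \<and>
     (\<forall>X\<in>Obj V. Idt V X \<in> hom V X X) \<and>
     (\<forall>f\<in>Arr V. \<forall>g\<in>Arr V. Cod V f = Dom V g \<longrightarrow> Cmp V g f \<in> hom V (Dom V f) (Cod V g)) \<and>
     (\<forall>f\<in>Arr V. Cmp V f (Idt V (Dom V f)) = f \<and> Cmp V (Idt V (Cod V f)) f = f) \<and>
     (\<forall>f\<in>Arr V. \<forall>g\<in>Arr V. \<forall>h\<in>Arr V. Cod V f = Dom V g \<longrightarrow> Cod V g = Dom V h \<longrightarrow>
        Cmp V h (Cmp V g f) = Cmp V (Cmp V h g) f)"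

definition isomorphism :: "('o,'m,'z) cat_scheme \<Rightarrow> 'm \<Rightarrow> bool" where
  "isomorphism V f \<longleftrightarrow> f \<in> Arr V \<and>
     (\<exists>g\<in>hom V (Cod V f) (Dom V f). Cmp V g f = Idt V (Dom V f) \<and> Cmp V f g = Idt V (Cod V f))"

definition inv_arr :: "('o,'m,'z) cat_scheme \<Rightarrow> 'm \<Rightarrow> 'm" where
  "inv_arr V f = (SOME g. g \<in> hom V (Cod V f) (Dom V f) \<and>
      Cmp V g f = Idt V (Dom V f) \<and> Cmp V f g = Idt V (Cod V f))"

definition monoidal_structure ::
  "('o,'m,'z) cat_scheme \<Rightarrow> ('o \<Rightarrow> 'o \<Rightarrow> 'o) \<Rightarrow> ('m \<Rightarrow> 'm \<Rightarrow> 'm) \<Rightarrow> 'o \<Rightarrow>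
   ('o \<Rightarrow> 'o \<Rightarrow> 'o \<Rightarrow> 'm) \<Rightarrow> ('o \<Rightarrow> 'm) \<Rightarrow> ('o \<Rightarrow> 'm) \<Rightarrow> bool" where
  "monoidal_structure V T Tm U a l r \<longleftrightarrow>
     U \<in> Obj V \<and>
     (\<forall>X\<in>Obj V. \<forall>Y\<in>Obj V. T X Y \<in> Obj V) \<and>
     (\<forall>f\<in>Arr V. \<forall>g\<in>Arr V. Tm f g \<in> hom V (T (Dom V f) (Dom V g)) (T (Cod V f) (Cod V g))) \<and>
     (\<forall>X\<in>Obj V. \<forall>Y\<in>Obj V. Tm (Idt V X) (Idt V Y) = Idt V (T X Y)) \<and>
     (\<forall>f\<in>Arr V. \<forall>g\<in>Arr V. \<forall>f'\<in>Arr V. \<forall>g'\<in>Arr V. Cod V f = Dom V g \<longrightarrow> Cod V f' = Dom V g' \<longrightarrow>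
        Tm (Cmp V g f) (Cmp V g' f') = Cmp V (Tm g g') (Tm f f')) \<and>
     (\<forall>X\<in>Obj V. \<forall>Y\<in>Obj V. \<forall>Z\<in>Obj V.
        a X Y Z \<in> hom V (T (T X Y) Z) (T X (T Y Z)) \<and> isomorphism V (a X Y Z)) \<and>
     (\<forall>X\<in>Obj V. l X \<in> hom V (T U X) X \<and> isomorphism V (l X)) \<and>
     (\<forall>X\<in>Obj V. r X \<in> hom V (T X U) X \<and> isomorphism V (r X)) \<and>
     (\<forall>f\<in>Arr V. \<forall>g\<in>Arr V. \<forall>h\<in>Arr V.
        Cmp V (a (Cod V f) (Cod V g) (Cod V h)) (Tm (Tm f g) h)
          = Cmp V (Tm f (Tm g h)) (a (Dom V f) (Dom V g) (Dom V h))) \<and>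
     (\<forall>f\<in>Arr V. Cmp V (l (Cod V f)) (Tm (Idt V U) f) = Cmp V f (l (Dom V f))) \<and>
     (\<forall>f\<in>Arr V. Cmp V (r (Cod V f)) (Tm f (Idt V U)) = Cmp V f (r (Dom V f))) \<and>
     (\<forall>W\<in>Obj V. \<forall>X\<in>Obj V. \<forall>Y\<in>Obj V. \<forall>Z\<in>Obj V.
        Cmp V (Tm (Idt V W) (a X Y Z)) (Cmp V (a W (T X Y) Z) (Tm (a W X Y) (Idt V Z)))
          = Cmp V (a W X (T Y Z)) (a (T W X) Y Z)) \<and>
     (\<forall>X\<in>Obj V. \<forall>Y\<in>Obj V. Cmp V (Tm (Idt V X) (l Y)) (a X U Y) = Tm (r X) (Idt V Y))"

record ('o,'m) moncat = "('o,'m) cat" +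
  Ten :: "'o \<Rightarrow> 'o \<Rightarrow> 'o"
  TenA :: "'m \<Rightarrow> 'm \<Rightarrow> 'm"
  Unit :: "'o"
  Asc :: "'o \<Rightarrow> 'o \<Rightarrow> 'o \<Rightarrow> 'm"
  Lu :: "'o \<Rightarrow> 'm"
  Ru :: "'o \<Rightarrow> 'm"

definition monoidal :: "('o,'m,'z) moncat_scheme \<Rightarrow> bool" where
  "monoidal V \<longleftrightarrow> category V \<and>
     monoidal_structure V (Ten V) (TenA V) (Unit V) (Asc V) (Lu V) (Ru V)"

section \<open>Normal duoidal categories (with J = I and \<nu> = identity of I)\<close>

text \<open>Second monoidal structure (Str, StrA, I, SAsc, SLu, SRu);
  Xi W X Y Z : (W \<otimes> X) \<star> (Y \<otimes> Z) \<rightarrow> (W \<star> Y) \<otimes> (X \<star> Z);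
  Mu : I \<star> I \<rightarrow> I;  Gam : J \<rightarrow> J \<otimes> J with J = I; \<nu> = identity.\<close>

record ('o,'m) duoidal = "('o,'m) moncat" +
  Str :: "'o \<Rightarrow> 'o \<Rightarrow> 'o"
  StrA :: "'m \<Rightarrow> 'm \<Rightarrow> 'm"
  SAsc :: "'o \<Rightarrow> 'o \<Rightarrow> 'o \<Rightarrow> 'm"
  SLu :: "'o \<Rightarrow> 'm"
  SRu :: "'o \<Rightarrow> 'm"
  Xi :: "'o \<Rightarrow> 'o \<Rightarrow> 'o \<Rightarrow> 'o \<Rightarrow> 'm"
  Mu :: "'m"
  Gam :: "'m"

definition duoidal_axioms ::
  "('o,'m,'z) cat_scheme \<Rightarrow> ('o \<Rightarrow> 'o \<Rightarrow> 'o) \<Rightarrow> ('m \<Rightarrow> 'm \<Rightarrow> 'm) \<Rightarrow> 'o \<Rightarrow>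
   ('o \<Rightarrow> 'o \<Rightarrow> 'o \<Rightarrow> 'm) \<Rightarrow> ('o \<Rightarrow> 'm) \<Rightarrow> ('o \<Rightarrow> 'm) \<Rightarrow>
   ('o \<Rightarrow> 'o \<Rightarrow> 'o) \<Rightarrow> ('m \<Rightarrow> 'm \<Rightarrow> 'm) \<Rightarrow>
   ('o \<Rightarrow> 'o \<Rightarrow> 'o \<Rightarrow> 'm) \<Rightarrow> ('o \<Rightarrow> 'm) \<Rightarrow> ('o \<Rightarrow> 'm) \<Rightarrow>
   ('o \<Rightarrow> 'o \<Rightarrow> 'o \<Rightarrow> 'o \<Rightarrow> 'm) \<Rightarrow> 'm \<Rightarrow> 'm \<Rightarrow> bool" where
  "duoidal_axioms V T Tm I a l r S Sm sa sl sr xi mu gam \<longleftrightarrow>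
    (let c = Cmp V; i = Idt V; Ob = Obj V; A = Arr V; d = Dom V; e = Cod V in
     \<comment> \<open>typing of the structure morphisms\<close>
     (\<forall>W\<in>Ob. \<forall>X\<in>Ob. \<forall>Y\<in>Ob. \<forall>Z\<in>Ob. xi W X Y Z \<in> hom V (S (T W X) (T Y Z)) (T (S W Y) (S X Z))) \<and>
     mu \<in> hom V (S I I) I \<and> gam \<in> hom V I (T I I) \<and>
     \<comment> \<open>(\<star>, xi, mu) is an opmonoidal functor V\<times>V \<rightarrow> V for \<otimes>: naturality of xi\<close>
     (\<forall>f\<in>A. \<forall>g\<in>A. \<forall>h\<in>A. \<forall>k\<in>A.
        c (xi (e f) (e g) (e h) (e k)) (Sm (Tm f g) (Tm h k))
          = c (Tm (Sm f h) (Sm g k)) (xi (d f) (d g) (d h) (d k))) \<and>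
     \<comment> \<open>coassociativity\<close>
     (\<forall>Z\<in>Ob. \<forall>Y\<in>Ob. \<forall>X\<in>Ob. \<forall>Z'\<in>Ob. \<forall>Y'\<in>Ob. \<forall>X'\<in>Ob.
        c (a (S Z Z') (S Y Y') (S X X')) (c (Tm (xi Z Y Z' Y') (i (S X X'))) (xi (T Z Y) X (T Z' Y') X'))
          = c (Tm (i (S Z Z')) (xi Y X Y' X')) (c (xi Z (T Y X) Z' (T Y' X')) (Sm (a Z Y X) (a Z' Y' X')))) \<and>
     \<comment> \<open>counitality\<close>
     (\<forall>X\<in>Ob. \<forall>X'\<in>Ob.
        c (l (S X X')) (c (Tm mu (i (S X X'))) (xi I X I X')) = Sm (l X) (l X')) \<and>
     (\<forall>X\<in>Ob. \<forall>X'\<in>Ob.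
        c (r (S X X')) (c (Tm (i (S X X')) mu) (xi X I X' I)) = Sm (r X) (r X')) \<and>
     \<comment> \<open>(J, gam, nu) = (I, gam, 1) is an opmonoidal functor 1 \<rightarrow> V\<close>
     c (a I I I) (c (Tm gam (i I)) gam) = c (Tm (i I) gam) gam \<and>
     c (l I) (c (Tm (i I) (i I)) gam) = i I \<and>
     c (r I) (c (Tm (i I) (i I)) gam) = i I \<and>
     \<comment> \<open>the associator of \<star> is an opmonoidal transformation\<close>
     (\<forall>X1\<in>Ob. \<forall>Y1\<in>Ob. \<forall>Z1\<in>Ob. \<forall>X2\<in>Ob. \<forall>Y2\<in>Ob. \<forall>Z2\<in>Ob.
        c (xi X1 X2 (S Y1 Z1) (S Y2 Z2)) (c (Sm (i (T X1 X2)) (xi Y1 Y2 Z1 Z2)) (sa (T X1 X2) (T Y1 Y2) (T Z1 Z2)))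
          = c (Tm (sa X1 Y1 Z1) (sa X2 Y2 Z2)) (c (xi (S X1 Y1) (S X2 Y2) Z1 Z2) (Sm (xi X1 X2 Y1 Y2) (i (T Z1 Z2))))) \<and>
     c mu (c (Sm (i I) mu) (sa I I I)) = c mu (Sm mu (i I)) \<and>
     \<comment> \<open>the left unitor of \<star> is an opmonoidal transformation\<close>
     (\<forall>X1\<in>Ob. \<forall>X2\<in>Ob.
        c (Tm (sl X1) (sl X2)) (c (xi I I X1 X2) (Sm gam (i (T X1 X2)))) = sl (T X1 X2)) \<and>
     sl I = c mu (Sm (i I) (i I)) \<and>
     \<comment> \<open>the right unitor of \<star> is an opmonoidal transformation\<close>
     (\<forall>X1\<in>Ob. \<forall>X2\<in>Ob.
        c (Tm (sr X1) (sr X2)) (c (xi X1 X2 I I) (Sm (i (T X1 X2)) gam)) = sr (T X1 X2)) \<and>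
     sr I = c mu (Sm (i I) (i I)))"

definition normal_duoidal :: "('o,'m,'z) duoidal_scheme \<Rightarrow> bool" where
  "normal_duoidal V \<longleftrightarrow> monoidal V \<and>
     monoidal_structure V (Str V) (StrA V) (Unit V) (SAsc V) (SLu V) (SRu V) \<and>
     duoidal_axioms V (Ten V) (TenA V) (Unit V) (Asc V) (Lu V) (Ru V)
                      (Str V) (StrA V) (SAsc V) (SLu V) (SRu V) (Xi V) (Mu V) (Gam V)"

text \<open>GHom X A B = C_X(A,B); GRe A B \<alpha> f = \<alpha>^* f;
  GCmp Y X A B D g f = g \<circ> f for g \<in> C_Y(B,D), f \<in> C_X(A,B); GId A = i_A.\<close>

record ('c,'o,'m,'f) gcat =
  GOb :: "'c set"
  GHom :: "'o \<Rightarrow> 'c \<Rightarrow> 'c \<Rightarrow> 'f set"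
  GRe :: "'c \<Rightarrow> 'c \<Rightarrow> 'm \<Rightarrow> 'f \<Rightarrow> 'f"
  GCmp :: "'o \<Rightarrow> 'o \<Rightarrow> 'c \<Rightarrow> 'c \<Rightarrow> 'c \<Rightarrow> 'f \<Rightarrow> 'f \<Rightarrow> 'f"
  GId :: "'c \<Rightarrow> 'f"

definition left_graded :: "('o,'m,'z) moncat_scheme \<Rightarrow> ('c,'o,'m,'f) gcat \<Rightarrow> bool" where
  "left_graded U C \<longleftrightarrow>
    (let Ob = Obj U; B = GOb C in
     (\<forall>X\<in>Ob. \<forall>Y\<in>Ob. \<forall>\<alpha>\<in>hom U Y X. \<forall>A1\<in>B. \<forall>A2\<in>B. \<forall>f\<in>GHom C X A1 A2.
        GRe C A1 A2 \<alpha> f \<in> GHom C Y A1 A2) \<and>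
     (\<forall>X\<in>Ob. \<forall>A1\<in>B. \<forall>A2\<in>B. \<forall>f\<in>GHom C X A1 A2. GRe C A1 A2 (Idt U X) f = f) \<and>
     (\<forall>X\<in>Ob. \<forall>Y\<in>Ob. \<forall>Z\<in>Ob. \<forall>\<alpha>\<in>hom U Y X. \<forall>\<beta>\<in>hom U Z Y.
        \<forall>A1\<in>B. \<forall>A2\<in>B. \<forall>f\<in>GHom C X A1 A2.
        GRe C A1 A2 (Cmp U \<alpha> \<beta>) f = GRe C A1 A2 \<beta> (GRe C A1 A2 \<alpha> f)) \<and>
     (\<forall>X\<in>Ob. \<forall>Y\<in>Ob. \<forall>A1\<in>B. \<forall>A2\<in>B. \<forall>A3\<in>B. \<forall>g\<in>GHom C Y A2 A3. \<forall>f\<in>GHom C X A1 A2.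
        GCmp C Y X A1 A2 A3 g f \<in> GHom C (Ten U Y X) A1 A3) \<and>
     (\<forall>A1\<in>B. GId C A1 \<in> GHom C (Unit U) A1 A1) \<and>
     (\<forall>X\<in>Ob. \<forall>Y\<in>Ob. \<forall>X'\<in>Ob. \<forall>Y'\<in>Ob. \<forall>\<alpha>\<in>hom U X' X. \<forall>\<beta>\<in>hom U Y' Y.
        \<forall>A1\<in>B. \<forall>A2\<in>B. \<forall>A3\<in>B. \<forall>g\<in>GHom C Y A2 A3. \<forall>f\<in>GHom C X A1 A2.
        GCmp C Y' X' A1 A2 A3 (GRe C A2 A3 \<beta> g) (GRe C A1 A2 \<alpha> f)
          = GRe C A1 A3 (TenA U \<beta> \<alpha>) (GCmp C Y X A1 A2 A3 g f)) \<and>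
     (\<forall>X\<in>Ob. \<forall>Y\<in>Ob. \<forall>Z\<in>Ob. \<forall>A1\<in>B. \<forall>A2\<in>B. \<forall>A3\<in>B. \<forall>A4\<in>B.
        \<forall>h\<in>GHom C Z A3 A4. \<forall>g\<in>GHom C Y A2 A3. \<forall>f\<in>GHom C X A1 A2.
        GCmp C (Ten U Z Y) X A1 A2 A4 (GCmp C Z Y A2 A3 A4 h g) f
          = GRe C A1 A4 (Asc U Z Y X) (GCmp C Z (Ten U Y X) A1 A3 A4 h (GCmp C Y X A1 A2 A3 g f))) \<and>
     (\<forall>X\<in>Ob. \<forall>A1\<in>B. \<forall>A2\<in>B. \<forall>f\<in>GHom C X A1 A2.
        GCmp C X (Unit U) A1 A1 A2 f (GId C A1) = GRe C A1 A2 (Ru U X) f) \<and>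
     (\<forall>X\<in>Ob. \<forall>A1\<in>B. \<forall>A2\<in>B. \<forall>f\<in>GHom C X A1 A2.
        GCmp C (Unit U) X A1 A2 A2 (GId C A2) f = GRe C A1 A2 (Lu U X) f))"

definition Cstar :: "('o,'m,'z) duoidal_scheme \<Rightarrow> ('c,'o,'m,'f) gcat \<Rightarrow> ('c,'o\<times>'o,'m\<times>'m,'f) gcat" where
  "Cstar V C = \<lparr> GOb = GOb C,
      GHom = (\<lambda>(X,X') A1 A2. GHom C (Str V X X') A1 A2),
      GRe = (\<lambda>A1 A2 (\<alpha>,\<beta>) f. GRe C A1 A2 (StrA V \<alpha> \<beta>) f),
      GCmp = (\<lambda>(Y,Y') (X,X') A1 A2 A3 g f.
                GRe C A1 A3 (Xi V Y X Y' X') (GCmp C (Str V Y Y') (Str V X X') A1 A2 A3 g f)),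
      GId = (\<lambda>A1. GRe C A1 A1 (Mu V) (GId C A1)) \<rparr>"

definition sigma :: "('o,'m,'z) duoidal_scheme \<Rightarrow> 'o \<Rightarrow> 'o \<Rightarrow> 'm" where
  "sigma V X X' = Cmp V (TenA V (SRu V X) (SLu V X'))
      (Cmp V (Xi V X (Unit V) (Unit V) X') (StrA V (inv_arr V (Ru V X)) (inv_arr V (Lu V X'))))"

definition tau :: "('o,'m,'z) duoidal_scheme \<Rightarrow> 'o \<Rightarrow> 'o \<Rightarrow> 'm" where
  "tau V X X' = Cmp V (TenA V (SLu V X') (SRu V X))
      (Cmp V (Xi V (Unit V) X X' (Unit V)) (StrA V (inv_arr V (Lu V X)) (inv_arr V (Ru V X'))))"

definition vgraded_squares :: "('o,'m,'z) duoidal_scheme \<Rightarrow> ('c,'o,'m,'f) gcat \<Rightarrow>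
    ('o \<times> 'o \<times> 'c \<times> 'c \<times> 'c \<times> 'c \<times> 'f \<times> 'f \<times> 'f \<times> 'f) set" where
  "vgraded_squares V C = {(X, X', A, A', B, B', f, g, \<phi>, \<phi>') | X X' A A' B B' f g \<phi> \<phi>'.
      X \<in> Obj V \<and> X' \<in> Obj V \<and> A \<in> GOb C \<and> A' \<in> GOb C \<and> B \<in> GOb C \<and> B' \<in> GOb C \<and>
      f \<in> GHom C X A A' \<and> g \<in> GHom C X B B' \<and> \<phi> \<in> GHom C X' A B \<and> \<phi>' \<in> GHom C X' A' B' \<and>
      GRe C A B' (sigma V X X') (GCmp C X X' A B B' g \<phi>)
        = GRe C A B' (tau V X X') (GCmp C X' X A A' B' \<phi>' f)}"

definition bigraded_squares :: "('o,'m,'z) moncat_scheme \<Rightarrow> ('c,'o\<times>'o,'m\<times>'m,'f) gcat \<Rightarrow>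
    ('o \<times> 'o \<times> 'c \<times> 'c \<times> 'c \<times> 'c \<times> 'f \<times> 'f \<times> 'f \<times> 'f) set" where
  "bigraded_squares V D = {(X, X', A, A', B, B', f, g, \<phi>, \<phi>') | X X' A A' B B' f g \<phi> \<phi>'.
      X \<in> Obj V \<and> X' \<in> Obj V \<and> A \<in> GOb D \<and> A' \<in> GOb D \<and> B \<in> GOb D \<and> B' \<in> GOb D \<and>
      f \<in> GHom D (X, Unit V) A A' \<and> g \<in> GHom D (X, Unit V) B B' \<and>
      \<phi> \<in> GHom D (Unit V, X') A B \<and> \<phi>' \<in> GHom D (Unit V, X') A' B' \<and>
      GRe D A B' (inv_arr V (Ru V X), inv_arr V (Lu V X'))
          (GCmp D (X, Unit V) (Unit V, X') A B B' g \<phi>)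
        = GRe D A B' (inv_arr V (Lu V X), inv_arr V (Ru V X'))
          (GCmp D (Unit V, X') (X, Unit V) A A' B' \<phi>' f)}"

text \<open>(f,g,\<phi>,\<phi>') \<mapsto> (f_l, g_l, \<phi>_r, \<phi>'_r) with f_l = \<rho>^* f and \<phi>_r = \<lambda>^* \<phi>.\<close>

definition square_transfer :: "('o,'m,'z) duoidal_scheme \<Rightarrow> ('c,'o,'m,'f) gcat \<Rightarrow>
    ('o \<times> 'o \<times> 'c \<times> 'c \<times> 'c \<times> 'c \<times> 'f \<times> 'f \<times> 'f \<times> 'f) \<Rightarrow>
    ('o \<times> 'o \<times> 'c \<times> 'c \<times> 'c \<times> 'c \<times> 'f \<times> 'f \<times> 'f \<times> 'f)" where
  "square_transfer V C = (\<lambda>(X, X', A, A', B, B', f, g, \<phi>, \<phi>').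
      (X, X', A, A', B, B', GRe C A A' (SRu V X) f, GRe C B B' (SRu V X) g,
       GRe C A B (SLu V X') \<phi>, GRe C A' B' (SLu V X') \<phi>'))"

end

theory Submission
  imports Defs
begin

text \<open>The unitors \<open>\<rho> : X \<star> I \<rightarrow> X\<close> and \<open>\<lambda> : I \<star> X \<rightarrow> X\<close> are isomorphisms, so
  reindexing along them is a bijection on hom-sets, inverse to reindexing along \<open>\<rho>\<inverse>\<close>
  and \<open>\<lambda>\<inverse>\<close>. Since composition commutes with reindexing, the \<open>(r\<inverse>, \<ell>\<inverse>)\<close>-reindexed
  \<open>\<star>\<close>-composite \<open>g\<^sub>\<ell> \<circ>\<^sub>\<star> \<phi>\<^sub>r\<close> is \<open>\<sigma>\<^sup>*(g \<circ> \<phi>)\<close> and, symmetrically,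
  \<open>(\<ell>\<inverse>, r\<inverse>)\<^sup>*(\<phi>'\<^sub>r \<circ>\<^sub>\<star> f\<^sub>\<ell>) = \<tau>\<^sup>*(\<phi>' \<circ> f)\<close>. So the transferred data form a bigraded
  square exactly when the original data form a \<open>V\<close>-graded square.\<close>

lemma category_hom_obj:
  assumes "category V" "f \<in> hom V X Y"
  shows "X \<in> Obj V" "Y \<in> Obj V"
  using assms unfolding category_def hom_def by auto

lemma category_comp_hom:
  assumes "category V" "f \<in> hom V X Y" "g \<in> hom V Y Z"
  shows "Cmp V g f \<in> hom V X Z"
  using assms unfolding category_def hom_def by auto

lemma category_comp_assoc:
  assumes "category V" "f \<in> hom V X Y" "g \<in> hom V Y Z" "h \<in> hom V Z W"
  shows "Cmp V h (Cmp V g f) = Cmp V (Cmp V h g) f"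
  using assms unfolding category_def hom_def by auto

lemma isomorphism_inv_arr:
  assumes "isomorphism V f" "f \<in> hom V X Y"
  shows "inv_arr V f \<in> hom V Y X" "Cmp V (inv_arr V f) f = Idt V X" "Cmp V f (inv_arr V f) = Idt V Y"
proof -
  have "\<exists>g. g \<in> hom V (Cod V f) (Dom V f) \<and> Cmp V g f = Idt V (Dom V f) \<and> Cmp V f g = Idt V (Cod V f)"
    using assms(1) unfolding isomorphism_def by blast
  from someI_ex[OF this] show "inv_arr V f \<in> hom V Y X" "Cmp V (inv_arr V f) f = Idt V X"
      "Cmp V f (inv_arr V f) = Idt V Y"
    using assms(2) unfolding inv_arr_def hom_def by auto
qed

context
  fixes V T Tm U a l r
  assumes M: "monoidal_structure V T Tm U a l r"
begin

lemma monoidal_structure_unit_obj: "U \<in> Obj V"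
  using M unfolding monoidal_structure_def by (elim conjE) blast

lemma monoidal_structure_tensor_hom:
  "f \<in> hom V X Y \<Longrightarrow> g \<in> hom V X' Y' \<Longrightarrow> Tm f g \<in> hom V (T X X') (T Y Y')"
  using M unfolding monoidal_structure_def hom_def by (elim conjE) auto

lemma monoidal_structure_lunit: "X \<in> Obj V \<Longrightarrow> l X \<in> hom V (T U X) X \<and> isomorphism V (l X)"
  using M unfolding monoidal_structure_def by (elim conjE) blast

lemma monoidal_structure_runit: "X \<in> Obj V \<Longrightarrow> r X \<in> hom V (T X U) X \<and> isomorphism V (r X)"
  using M unfolding monoidal_structure_def by (elim conjE) blast

end

context
  fixes U :: "('o,'m,'z) moncat_scheme" and C :: "('c,'o,'m,'f) gcat"
  assumes cat: "category U" and LG: "left_graded U C"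
begin

lemma graded_reindex_hom:
  assumes "\<alpha> \<in> hom U Y X" "A1 \<in> GOb C" "A2 \<in> GOb C" "f \<in> GHom C X A1 A2"
  shows "GRe C A1 A2 \<alpha> f \<in> GHom C Y A1 A2"
proof -
  have "X \<in> Obj U" "Y \<in> Obj U"
    using assms(1) category_hom_obj[OF cat] by blast+
  with assms LG show ?thesis unfolding left_graded_def Let_def by (elim conjE) simp
qed

lemma graded_reindex_id:
  "X \<in> Obj U \<Longrightarrow> A1 \<in> GOb C \<Longrightarrow> A2 \<in> GOb C \<Longrightarrow> f \<in> GHom C X A1 A2 \<Longrightarrow>
   GRe C A1 A2 (Idt U X) f = f"
  using LG unfolding left_graded_def Let_def by (elim conjE) simp

lemma graded_reindex_comp:
  assumes "\<alpha> \<in> hom U Y X" "\<beta> \<in> hom U Z Y" "A1 \<in> GOb C" "A2 \<in> GOb C" "f \<in> GHom C X A1 A2"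
  shows "GRe C A1 A2 (Cmp U \<alpha> \<beta>) f = GRe C A1 A2 \<beta> (GRe C A1 A2 \<alpha> f)"
proof -
  have "X \<in> Obj U" "Y \<in> Obj U" "Z \<in> Obj U"
    using assms(1,2) category_hom_obj[OF cat] by blast+
  with assms LG show ?thesis unfolding left_graded_def Let_def by (elim conjE) simp
qed

lemma graded_comp_hom:
  "X \<in> Obj U \<Longrightarrow> Y \<in> Obj U \<Longrightarrow> A1 \<in> GOb C \<Longrightarrow> A2 \<in> GOb C \<Longrightarrow> A3 \<in> GOb C \<Longrightarrow>
   g \<in> GHom C Y A2 A3 \<Longrightarrow> f \<in> GHom C X A1 A2 \<Longrightarrow> GCmp C Y X A1 A2 A3 g f \<in> GHom C (Ten U Y X) A1 A3"
  using LG unfolding left_graded_def Let_def by (elim conjE) simp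

lemma graded_comp_reindex:
  assumes "\<alpha> \<in> hom U X' X" "\<beta> \<in> hom U Y' Y" "A1 \<in> GOb C" "A2 \<in> GOb C" "A3 \<in> GOb C"
    "g \<in> GHom C Y A2 A3" "f \<in> GHom C X A1 A2"
  shows "GCmp C Y' X' A1 A2 A3 (GRe C A2 A3 \<beta> g) (GRe C A1 A2 \<alpha> f)
     = GRe C A1 A3 (TenA U \<beta> \<alpha>) (GCmp C Y X A1 A2 A3 g f)"
proof -
  have "X \<in> Obj U" "Y \<in> Obj U" "X' \<in> Obj U" "Y' \<in> Obj U"
    using assms(1,2) category_hom_obj[OF cat] by blast+
  with assms LG show ?thesis unfolding left_graded_def Let_def by (elim conjE) simp
qed

lemma graded_reindex_inv_reindex:
  assumes "\<phi> \<in> hom U Y X" "isomorphism U \<phi>" "A1 \<in> GOb C" "A2 \<in> GOb C" "f \<in> GHom C X A1 A2"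
  shows "GRe C A1 A2 (inv_arr U \<phi>) (GRe C A1 A2 \<phi> f) = f"
proof -
  have "GRe C A1 A2 (inv_arr U \<phi>) (GRe C A1 A2 \<phi> f) = GRe C A1 A2 (Cmp U \<phi> (inv_arr U \<phi>)) f"
    using graded_reindex_comp[OF assms(1) isomorphism_inv_arr(1)[OF assms(2,1)] assms(3-5)] by simp
  also have "\<dots> = f"
    using isomorphism_inv_arr(3)[OF assms(2,1)] graded_reindex_id category_hom_obj[OF cat assms(1)] assms(3-5)
    by simp
  finally show ?thesis .
qed

lemma graded_reindex_reindex_inv:
  assumes "\<phi> \<in> hom U Y X" "isomorphism U \<phi>" "A1 \<in> GOb C" "A2 \<in> GOb C" "f \<in> GHom C Y A1 A2"
  shows "GRe C A1 A2 \<phi> (GRe C A1 A2 (inv_arr U \<phi>) f) = f"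
proof -
  have "GRe C A1 A2 \<phi> (GRe C A1 A2 (inv_arr U \<phi>) f) = GRe C A1 A2 (Cmp U (inv_arr U \<phi>) \<phi>) f"
    using graded_reindex_comp[OF isomorphism_inv_arr(1)[OF assms(2,1)] assms(1) assms(3-5)] by simp
  also have "\<dots> = f"
    using isomorphism_inv_arr(2)[OF assms(2,1)] graded_reindex_id category_hom_obj[OF cat assms(1)] assms(3-5)
    by simp
  finally show ?thesis .
qed

end

definition square_untransfer :: "('o,'m,'z) duoidal_scheme \<Rightarrow> ('c,'o,'m,'f) gcat \<Rightarrow>
    ('o \<times> 'o \<times> 'c \<times> 'c \<times> 'c \<times> 'c \<times> 'f \<times> 'f \<times> 'f \<times> 'f) \<Rightarrow>
    ('o \<times> 'o \<times> 'c \<times> 'c \<times> 'c \<times> 'c \<times> 'f \<times> 'f \<times> 'f \<times> 'f)" where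
  "square_untransfer V C = (\<lambda>(X, X', A, A', B, B', f, g, \<phi>, \<phi>').
      (X, X', A, A', B, B', GRe C A A' (inv_arr V (SRu V X)) f, GRe C B B' (inv_arr V (SRu V X)) g,
       GRe C A B (inv_arr V (SLu V X')) \<phi>, GRe C A' B' (inv_arr V (SLu V X')) \<phi>'))"

lemma normal_duoidal_category: "normal_duoidal V \<Longrightarrow> category V"
  unfolding normal_duoidal_def monoidal_def by blast

lemma normal_duoidal_tensor:
  "normal_duoidal V \<Longrightarrow> monoidal_structure V (Ten V) (TenA V) (Unit V) (Asc V) (Lu V) (Ru V)"
  unfolding normal_duoidal_def monoidal_def by blast

lemma normal_duoidal_star:
  "normal_duoidal V \<Longrightarrow> monoidal_structure V (Str V) (StrA V) (Unit V) (SAsc V) (SLu V) (SRu V)"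
  unfolding normal_duoidal_def by blast

lemma normal_duoidal_Xi_hom:
  assumes "normal_duoidal V" "W \<in> Obj V" "X \<in> Obj V" "Y \<in> Obj V" "Z \<in> Obj V"
  shows "Xi V W X Y Z \<in> hom V (Str V (Ten V W X) (Ten V Y Z)) (Ten V (Str V W Y) (Str V X Z))"
  using assms unfolding normal_duoidal_def duoidal_axioms_def Let_def by (elim conjE) simp

context
  fixes V :: "('o,'m,'z) duoidal_scheme" and C :: "('c,'o,'m,'f) gcat"
  assumes ND: "normal_duoidal V" and LG: "left_graded V C"
begin

text \<open>Instantiated with the unitors, the reindexing on the right becomes \<open>\<sigma>\<close> or \<open>\<tau>\<close>.\<close>

lemma Cstar_reindex_comp_reindex:
  assumes objs: "Y1 \<in> Obj V" "Y2 \<in> Obj V" "X1 \<in> Obj V" "X2 \<in> Obj V" "A \<in> GOb C" "B \<in> GOb C" "D \<in> GOb C"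
    and \<beta>: "\<beta> \<in> hom V (Str V Y1 Y2) Y" and \<alpha>: "\<alpha> \<in> hom V (Str V X1 X2) X"
    and \<gamma>: "\<gamma> \<in> hom V Z (Ten V Y1 X1)" and \<delta>: "\<delta> \<in> hom V Z' (Ten V Y2 X2)"
    and g: "g \<in> GHom C Y B D" and f: "f \<in> GHom C X A B"
  shows "GRe (Cstar V C) A D (\<gamma>, \<delta>)
      (GCmp (Cstar V C) (Y1, Y2) (X1, X2) A B D (GRe C B D \<beta> g) (GRe C A B \<alpha> f))
    = GRe C A D (Cmp V (TenA V \<beta> \<alpha>) (Cmp V (Xi V Y1 X1 Y2 X2) (StrA V \<gamma> \<delta>))) (GCmp C Y X A B D g f)"
proof -
  note cat = normal_duoidal_category[OF ND]
  have XY: "X \<in> Obj V" "Y \<in> Obj V"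
    using \<alpha> \<beta> category_hom_obj[OF cat] by blast+
  have h\<beta>\<alpha>: "TenA V \<beta> \<alpha> \<in> hom V (Ten V (Str V Y1 Y2) (Str V X1 X2)) (Ten V Y X)"
    using monoidal_structure_tensor_hom[OF normal_duoidal_tensor[OF ND] \<beta> \<alpha>] .
  have hXi: "Xi V Y1 X1 Y2 X2 \<in> hom V (Str V (Ten V Y1 X1) (Ten V Y2 X2)) (Ten V (Str V Y1 Y2) (Str V X1 X2))"
    using normal_duoidal_Xi_hom[OF ND objs(1,3,2,4)] .
  have h\<gamma>\<delta>: "StrA V \<gamma> \<delta> \<in> hom V (Str V Z Z') (Str V (Ten V Y1 X1) (Ten V Y2 X2))"
    using monoidal_structure_tensor_hom[OF normal_duoidal_star[OF ND] \<gamma> \<delta>] .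
  have gf: "GCmp C Y X A B D g f \<in> GHom C (Ten V Y X) A D"
    using graded_comp_hom[OF cat LG XY(1,2) objs(5-7) g f] .
  have "GRe (Cstar V C) A D (\<gamma>, \<delta>)
      (GCmp (Cstar V C) (Y1, Y2) (X1, X2) A B D (GRe C B D \<beta> g) (GRe C A B \<alpha> f))
    = GRe C A D (StrA V \<gamma> \<delta>) (GRe C A D (Xi V Y1 X1 Y2 X2)
        (GRe C A D (TenA V \<beta> \<alpha>) (GCmp C Y X A B D g f)))"
    using graded_comp_reindex[OF cat LG \<alpha> \<beta> objs(5-7) g f] by (simp add: Cstar_def)
  also have "\<dots> = GRe C A D (Cmp V (Cmp V (TenA V \<beta> \<alpha>) (Xi V Y1 X1 Y2 X2)) (StrA V \<gamma> \<delta>))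
      (GCmp C Y X A B D g f)"
    using graded_reindex_comp[OF cat LG h\<beta>\<alpha> hXi objs(5,7) gf]
      graded_reindex_comp[OF cat LG category_comp_hom[OF cat hXi h\<beta>\<alpha>] h\<gamma>\<delta> objs(5,7) gf]
    by simp
  finally show ?thesis
    using category_comp_assoc[OF cat h\<gamma>\<delta> hXi h\<beta>\<alpha>] by simp
qed

lemma square_transfer_in_bigraded_squares_iff:
  assumes objs: "X \<in> Obj V" "X' \<in> Obj V" "A \<in> GOb C" "A' \<in> GOb C" "B \<in> GOb C" "B' \<in> GOb C"
    and f: "f \<in> GHom C X A A'" and g: "g \<in> GHom C X B B'"
    and \<phi>: "\<phi> \<in> GHom C X' A B" and \<phi>': "\<phi>' \<in> GHom C X' A' B'"
  shows "square_transfer V C (X, X', A, A', B, B', f, g, \<phi>, \<phi>') \<in> bigraded_squares V (Cstar V C)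
    \<longleftrightarrow> (X, X', A, A', B, B', f, g, \<phi>, \<phi>') \<in> vgraded_squares V C"
proof -
  note cat = normal_duoidal_category[OF ND]
  note T = normal_duoidal_tensor[OF ND] and S = normal_duoidal_star[OF ND]
  have I: "Unit V \<in> Obj V"
    using monoidal_structure_unit_obj[OF T] .
  have runit: "\<And>Y. Y \<in> Obj V \<Longrightarrow> SRu V Y \<in> hom V (Str V Y (Unit V)) Y"
    and lunit: "\<And>Y. Y \<in> Obj V \<Longrightarrow> SLu V Y \<in> hom V (Str V (Unit V) Y) Y"
    using monoidal_structure_runit[OF S] monoidal_structure_lunit[OF S] by blast+
  have r_inv: "\<And>Y. Y \<in> Obj V \<Longrightarrow> inv_arr V (Ru V Y) \<in> hom V Y (Ten V Y (Unit V))"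
    by (meson isomorphism_inv_arr(1) monoidal_structure_runit[OF T])
  have l_inv: "\<And>Y. Y \<in> Obj V \<Longrightarrow> inv_arr V (Lu V Y) \<in> hom V Y (Ten V (Unit V) Y)"
    by (meson isomorphism_inv_arr(1) monoidal_structure_lunit[OF T])
  have transferred:
    "GRe C A A' (SRu V X) f \<in> GHom C (Str V X (Unit V)) A A'"
    "GRe C B B' (SRu V X) g \<in> GHom C (Str V X (Unit V)) B B'"
    "GRe C A B (SLu V X') \<phi> \<in> GHom C (Str V (Unit V) X') A B"
    "GRe C A' B' (SLu V X') \<phi>' \<in> GHom C (Str V (Unit V) X') A' B'"
    using graded_reindex_hom[OF cat LG runit[OF objs(1)] objs(3,4) f]
      graded_reindex_hom[OF cat LG runit[OF objs(1)] objs(5,6) g]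
      graded_reindex_hom[OF cat LG lunit[OF objs(2)] objs(3,5) \<phi>]
      graded_reindex_hom[OF cat LG lunit[OF objs(2)] objs(4,6) \<phi>'] .
  have "GRe (Cstar V C) A B' (inv_arr V (Ru V X), inv_arr V (Lu V X'))
      (GCmp (Cstar V C) (X, Unit V) (Unit V, X') A B B' (GRe C B B' (SRu V X) g) (GRe C A B (SLu V X') \<phi>))
    = GRe C A B' (sigma V X X') (GCmp C X X' A B B' g \<phi>)"
    unfolding sigma_def
    using Cstar_reindex_comp_reindex[OF objs(1) I I objs(2) objs(3,5,6) runit[OF objs(1)] lunit[OF objs(2)]
        r_inv[OF objs(1)] l_inv[OF objs(2)] g \<phi>] .
  moreover have "GRe (Cstar V C) A B' (inv_arr V (Lu V X), inv_arr V (Ru V X'))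
      (GCmp (Cstar V C) (Unit V, X') (X, Unit V) A A' B' (GRe C A' B' (SLu V X') \<phi>') (GRe C A A' (SRu V X) f))
    = GRe C A B' (tau V X X') (GCmp C X' X A A' B' \<phi>' f)"
    unfolding tau_def
    using Cstar_reindex_comp_reindex[OF I objs(2) objs(1) I objs(3,4,6) lunit[OF objs(2)] runit[OF objs(1)]
        l_inv[OF objs(1)] r_inv[OF objs(2)] \<phi>' f] .
  ultimately show ?thesis
    unfolding square_transfer_def bigraded_squares_def vgraded_squares_def
    using objs f g \<phi> \<phi>' transferred by (simp add: Cstar_def)
qed

lemma square_untransfer_transfer:
  assumes s: "s \<in> vgraded_squares V C"
  shows "square_untransfer V C (square_transfer V C s) = s"
proof -
  note S = normal_duoidal_star[OF ND]
  obtain X X' A A' B B' f g \<phi> \<phi>' where s_eq: "s = (X, X', A, A', B, B', f, g, \<phi>, \<phi>')"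
    and objs: "X \<in> Obj V" "X' \<in> Obj V" "A \<in> GOb C" "A' \<in> GOb C" "B \<in> GOb C" "B' \<in> GOb C"
    and arrs: "f \<in> GHom C X A A'" "g \<in> GHom C X B B'" "\<phi> \<in> GHom C X' A B" "\<phi>' \<in> GHom C X' A' B'"
    using s unfolding vgraded_squares_def by auto
  have runit: "SRu V X \<in> hom V (Str V X (Unit V)) X" "isomorphism V (SRu V X)"
    and lunit: "SLu V X' \<in> hom V (Str V (Unit V) X') X'" "isomorphism V (SLu V X')"
    using monoidal_structure_runit[OF S objs(1)] monoidal_structure_lunit[OF S objs(2)] by blast+
  show ?thesis
    unfolding s_eq square_transfer_def square_untransfer_def
    using graded_reindex_inv_reindex[OF normal_duoidal_category[OF ND] LG] runit lunit objs arrs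
    by simp
qed

lemma square_untransfer_in_vgraded_squares:
  assumes t: "t \<in> bigraded_squares V (Cstar V C)"
  shows "square_untransfer V C t \<in> vgraded_squares V C"
    and "square_transfer V C (square_untransfer V C t) = t"
proof -
  note cat = normal_duoidal_category[OF ND] and S = normal_duoidal_star[OF ND]
  obtain X X' A A' B B' f g \<phi> \<phi>' where t_eq: "t = (X, X', A, A', B, B', f, g, \<phi>, \<phi>')"
    and objs: "X \<in> Obj V" "X' \<in> Obj V" "A \<in> GOb C" "A' \<in> GOb C" "B \<in> GOb C" "B' \<in> GOb C"
    and arrs: "f \<in> GHom C (Str V X (Unit V)) A A'" "g \<in> GHom C (Str V X (Unit V)) B B'"
      "\<phi> \<in> GHom C (Str V (Unit V) X') A B" "\<phi>' \<in> GHom C (Str V (Unit V) X') A' B'"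
    using t unfolding bigraded_squares_def by (auto simp: Cstar_def)
  have runit: "SRu V X \<in> hom V (Str V X (Unit V)) X" "isomorphism V (SRu V X)"
    and lunit: "SLu V X' \<in> hom V (Str V (Unit V) X') X'" "isomorphism V (SLu V X')"
    using monoidal_structure_runit[OF S objs(1)] monoidal_structure_lunit[OF S objs(2)] by blast+
  have runit_inv: "inv_arr V (SRu V X) \<in> hom V X (Str V X (Unit V))"
    and lunit_inv: "inv_arr V (SLu V X') \<in> hom V X' (Str V (Unit V) X')"
    by (rule isomorphism_inv_arr(1)[OF runit(2,1)], rule isomorphism_inv_arr(1)[OF lunit(2,1)])
  show round_trip: "square_transfer V C (square_untransfer V C t) = t"
    unfolding t_eq square_transfer_def square_untransfer_def
    using graded_reindex_reindex_inv[OF cat LG] runit lunit objs arrs by simp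
  have untransferred: "GRe C A A' (inv_arr V (SRu V X)) f \<in> GHom C X A A'"
    "GRe C B B' (inv_arr V (SRu V X)) g \<in> GHom C X B B'"
    "GRe C A B (inv_arr V (SLu V X')) \<phi> \<in> GHom C X' A B"
    "GRe C A' B' (inv_arr V (SLu V X')) \<phi>' \<in> GHom C X' A' B'"
    using graded_reindex_hom[OF cat LG runit_inv objs(3,4) arrs(1)]
      graded_reindex_hom[OF cat LG runit_inv objs(5,6) arrs(2)]
      graded_reindex_hom[OF cat LG lunit_inv objs(3,5) arrs(3)]
      graded_reindex_hom[OF cat LG lunit_inv objs(4,6) arrs(4)] .
  show "square_untransfer V C t \<in> vgraded_squares V C"
    using square_transfer_in_bigraded_squares_iff[OF objs untransferred] round_trip t
    unfolding t_eq square_untransfer_def by simp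
qed

end

theorem proposition13p4:
  fixes V :: "('o,'m,'z) duoidal_scheme" and C :: "('c,'o,'m,'f) gcat"
  assumes "normal_duoidal V" and "left_graded V C"
  shows "bij_betw (square_transfer V C) (vgraded_squares V C) (bigraded_squares V (Cstar V C))"
proof (rule bij_betw_byWitness[where f' = "square_untransfer V C"])
  show "square_transfer V C ` vgraded_squares V C \<subseteq> bigraded_squares V (Cstar V C)"
    using square_transfer_in_bigraded_squares_iff[OF assms]
    unfolding vgraded_squares_def by auto
qed (use square_untransfer_transfer[OF assms] square_untransfer_in_vgraded_squares[OF assms] in auto)

end
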